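(* Let $\mathcal H$ and $\mathcal H_\varepsilon$ be separable Hilbert spaces, $\mathfrak a$ and $\mathfrak a_\varepsilon$ closed densely defined non-negative sesquilinear forms in $\mathcal H$ and $\mathcal H_\varepsilon$, and $\mathcal A$, $\mathcal A_\varepsilon$ the non-negative self-adjoint operators associated with them. Let $J_\varepsilon:\mathcal H\to\mathcal H_\varepsilon$ and $\check J_\varepsilon:\mathcal H_\varepsilon\to\mathcal H$ be bounded linear operators and $\delta_\varepsilon,\check\delta_\varepsilon,\nu_\varepsilon,\check\nu_\varepsilon\ge0$ constants such that $$\|(\mathcal A_\varepsilon+\mathrm I)^{-1}J_\varepsilon-J_\varepsilon(\mathcal A+\mathrm I)^{-1}\|_{\mathcal H\to\mathcal H_\varepsilon}\le\delta_\varepsilon,\qquad \|\check J_\varepsilon(\mathcal A_\varepsilon+\mathrm I)^{-1}-(\mathcal A+\mathrm I)^{-1}\check J_\varepsilon\|_{\mathcal H_\varepsilon\to\mathcal H}\le\check\delta_\varepsilon,$$ $$\|f\|^2_{\mathcal H}\le\|J_\varepsilon f\|^2_{\mathcal H_\varepsilon}+\nu_\varepsilon\mathfrak a[f,f]\ \ \forall f\in\mathrm{dom}(\mathfrak a),\qquad \|u\|^2_{\mathcal H_\varepsilon}\le\|\check J_\varepsilon u\|^2_{\mathcal H}+\check\nu_\varepsilon\mathfrak a_\varepsilon[u,u]\ \ \forall u\in\mathrm{dom}(\mathfrak a_\varepsilon).$$ Then for any $d\in(0,1)$ such that $\nu_\varepsilon,\check\nu_\varepsilon\in[0,\frac d{1-d})$,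 $$\mathrm{dist}_{\rm out}\Big(\sigma((\mathcal A_\varepsilon+\mathrm I)^{-1})\cap[d,1],\ \sigma((\mathcal A+\mathrm I)^{-1})\Big)\le\frac{\check\delta_\varepsilon}{\sqrt{1-\check\nu_\varepsilon(d^{-1}-1)}},$$ $$\mathrm{dist}_{\rm out}\Big(\sigma((\mathcal A+\mathrm I)^{-1})\cap[d,1],\ \sigma((\mathcal A_\varepsilon+\mathrm I)^{-1})\Big)\le\frac{\delta_\varepsilon}{\sqrt{1-\nu_\varepsilon(d^{-1}-1)}}.$$
   Context: The subscript $\varepsilon$ is merely a label (the spaces and operators need not depend on any parameter). For compact sets $X,Y\subset\mathbb R$, $\mathrm{dist}_{\rm out}(X,Y)=\sup_{x\in X}\inf_{y\in Y}|x-y|$ (with the supremum over the empty set taken as $0$). *)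

theory Defs
  imports "HOL-Analysis.Analysis"
begin

text \<open>HOL-Analysis only provides real inner product
spaces; a complex Hilbert space is a real Hilbert space (real_inner + complete)
equipped with a complex scalar multiplication and a complex inner product
(linear in the first argument) whose real part is the real inner product.\<close>

class complex_hilbert = real_inner + complete_space +
  fixes scaleC :: "complex \<Rightarrow> 'a \<Rightarrow> 'a"
    and cinner :: "'a \<Rightarrow> 'a \<Rightarrow> complex"
  assumes scaleC_add_right: "scaleC c (x + y) = scaleC c x + scaleC c y"
    and scaleC_add_left: "scaleC (b + c) x = scaleC b x + scaleC c x"
    and scaleC_scaleC: "scaleC b (scaleC c x) = scaleC (b * c) x"
    and scaleC_one: "scaleC 1 x = x"
    and scaleC_of_real: "scaleC (complex_of_real r) x = scaleR r x"
    and cinner_add_left: "cinner (x + y) z = cinner x z + cinner y z"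
    and cinner_scaleC_left: "cinner (scaleC c x) y = c * cinner x y"
    and cinner_commute: "cinner y x = cnj (cinner x y)"
    and Re_cinner: "Re (cinner x y) = inner x y"

definition separable_space :: "'a::complex_hilbert itself \<Rightarrow> bool" where
  "separable_space _ \<longleftrightarrow> (\<exists>S::'a set. countable S \<and> closure S = UNIV)"

definition cbounded_linear :: "('a::complex_hilbert \<Rightarrow> 'b::complex_hilbert) \<Rightarrow> bool" where
  "cbounded_linear T \<longleftrightarrow> bounded_linear T \<and> (\<forall>c x. T (scaleC c x) = scaleC c (T x))"

definition csubspace :: "'a::complex_hilbert set \<Rightarrow> bool" where
  "csubspace D \<longleftrightarrow> 0 \<in> D \<and> (\<forall>x\<in>D. \<forall>y\<in>D. x + y \<in> D) \<and> (\<forall>c. \<forall>x\<in>D. scaleC c x \<in> D)"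

definition sesq_form :: "'a::complex_hilbert set \<Rightarrow> ('a \<Rightarrow> 'a \<Rightarrow> complex) \<Rightarrow> bool" where
  "sesq_form D a \<longleftrightarrow> csubspace D \<and>
     (\<forall>u\<in>D. \<forall>v\<in>D. \<forall>w\<in>D. a (u + v) w = a u w + a v w \<and> a w (u + v) = a w u + a w v) \<and>
     (\<forall>c. \<forall>u\<in>D. \<forall>v\<in>D. a (scaleC c u) v = c * a u v \<and> a u (scaleC c v) = cnj c * a u v)"

definition closed_dd_nonneg_form :: "'a::complex_hilbert set \<Rightarrow> ('a \<Rightarrow> 'a \<Rightarrow> complex) \<Rightarrow> bool" where
  "closed_dd_nonneg_form D a \<longleftrightarrow> sesq_form D a \<and> closure D = UNIV \<and>
     (\<forall>u\<in>D. Im (a u u) = 0 \<and> Re (a u u) \<ge> 0) \<and>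
     (\<forall>s u. (\<forall>n. s n \<in> D) \<and> s \<longlonglongrightarrow> u \<and>
        (\<forall>e>0. \<exists>N. \<forall>m\<ge>N. \<forall>n\<ge>N. Re (a (s m - s n) (s m - s n)) < e)
        \<longrightarrow> u \<in> D \<and> (\<lambda>n. Re (a (s n - u) (s n - u))) \<longlonglongrightarrow> 0)"

text \<open>Graph of the operator associated with the form (Kato's first representation
theorem): u \<in> dom A iff u \<in> dom a and there is w with a[u,v] = (w,v) for all v in dom a;
then A u = w.\<close>
definition form_op :: "'a::complex_hilbert set \<Rightarrow> ('a \<Rightarrow> 'a \<Rightarrow> complex) \<Rightarrow> ('a \<times> 'a) set" where
  "form_op D a = {(u, w). u \<in> D \<and> (\<forall>v\<in>D. a u v = cinner w v)}"

text \<open>The resolvent (A + I)^{-1}: f \<mapsto> the u \<in> dom A with A u + u = f.\<close>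
definition form_resolvent :: "'a::complex_hilbert set \<Rightarrow> ('a \<Rightarrow> 'a \<Rightarrow> complex) \<Rightarrow> 'a \<Rightarrow> 'a" where
  "form_resolvent D a f = (THE u. (u, f - u) \<in> form_op D a)"

definition cspectrum :: "('a::complex_hilbert \<Rightarrow> 'a) \<Rightarrow> complex set" where
  "cspectrum T = {z. \<not> bij (\<lambda>x. T x - scaleC z x)}"

definition real_spectrum :: "('a::complex_hilbert \<Rightarrow> 'a) \<Rightarrow> real set" where
  "real_spectrum T = {x. complex_of_real x \<in> cspectrum T}"

text \<open>dist_out(X,Y) = sup_{x\<in>X} inf_{y\<in>Y} |x-y|, valued in [0,\<infinity>]; sup over {} is 0.\<close>
definition dist_out :: "real set \<Rightarrow> real set \<Rightarrow> ennreal" where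
  "dist_out X Y = (SUP x\<in>X. INF y\<in>Y. ennreal \<bar>x - y\<bar>)"

end

(*
  Write R = (A + I)^-1 and R_e = (A_e + I)^-1; both are selfadjoint contractions. For t in
  the spectrum of R_e with t >= d take an approximate eigenvector u (|u| = 1, R_e u ~ t u)
  and put w = R_e u. Then a_e[w,w] = (u - w, w) ~ (1/t - 1) |w|^2 <= (1/d - 1) |w|^2, so the
  hypothesis on Jc gives |Jc w|^2 >= kappa |w|^2 with kappa = 1 - nu_c (1/d - 1), hence
  |Jc u| is at least about sqrt kappa. The commutator estimate makes Jc u an approximate
  eigenvector of R with defect at most delta_c, and for a bounded selfadjoint operator
  |(R - t) x| / |x| bounds the distance from t to the spectrum. Exchanging the two spaces
  gives the second inequality.
*)
theory Submission
  imports Defs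
begin

section \<open>Nonnegative symmetric bilinear forms\<close>

lemma quadratic_nonneg_imp_discriminant_le:
  fixes A B C :: real
  assumes nonneg: "\<And>t. 0 \<le> A + 2*t*B + t^2*C" and "0 \<le> C"
  shows "B^2 \<le> A*C"
proof (cases "C = 0")
  case True
  have "B = 0"
  proof (rule ccontr)
    assume "B \<noteq> 0"
    have "0 \<le> A + 2*(-(A+1)/(2*B))*B + (-(A+1)/(2*B))^2*C" by (rule nonneg)
    also have "\<dots> = -1" using \<open>B \<noteq> 0\<close> True by (simp add: field_simps)
    finally show False by simp
  qed
  then show ?thesis using True by simp
next
  case False
  with \<open>0 \<le> C\<close> have "C > 0" by simp
  have "0 \<le> A + 2*(-B/C)*B + (-B/C)^2*C" by (rule nonneg)
  also have "\<dots> = A - B^2/C" using \<open>C > 0\<close> by (simp add: field_simps power2_eq_square)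
  finally show ?thesis using \<open>C > 0\<close> by (simp add: field_simps)
qed

locale nonneg_sym_form =
  fixes D :: "'a::real_vector set" and b :: "'a \<Rightarrow> 'a \<Rightarrow> real"
  assumes subspace: "subspace D"
    and add_left: "\<And>x y z. x \<in> D \<Longrightarrow> y \<in> D \<Longrightarrow> z \<in> D \<Longrightarrow> b (x + y) z = b x z + b y z"
    and scale_left: "\<And>c x z. x \<in> D \<Longrightarrow> z \<in> D \<Longrightarrow> b (c *\<^sub>R x) z = c * b x z"
    and sym: "\<And>x y. x \<in> D \<Longrightarrow> y \<in> D \<Longrightarrow> b x y = b y x"
    and nonneg: "\<And>x. x \<in> D \<Longrightarrow> 0 \<le> b x x"
begin

lemma add_right: "x \<in> D \<Longrightarrow> y \<in> D \<Longrightarrow> z \<in> D \<Longrightarrow> b z (x + y) = b z x + b z y"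
  using sym add_left subspace_add[OF subspace] by metis

lemma scale_right: "x \<in> D \<Longrightarrow> z \<in> D \<Longrightarrow> b z (c *\<^sub>R x) = c * b z x"
  using sym scale_left subspace_scale[OF subspace] by metis

lemma diff_left: "x \<in> D \<Longrightarrow> y \<in> D \<Longrightarrow> z \<in> D \<Longrightarrow> b (x - y) z = b x z - b y z"
  using add_left[of x "-y" z] scale_left[of y z "-1"] subspace_neg[OF subspace] by simp

lemma diff_right: "x \<in> D \<Longrightarrow> y \<in> D \<Longrightarrow> z \<in> D \<Longrightarrow> b z (x - y) = b z x - b z y"
  using sym diff_left subspace_diff[OF subspace] by metis

lemma quadratic_expansion:
  assumes "x \<in> D" "y \<in> D"
  shows "b (x + t *\<^sub>R y) (x + t *\<^sub>R y) = b x x + 2*t*b x y + t^2 * b y y"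
  using assms subspace_scale[OF subspace] subspace_add[OF subspace] sym[OF assms]
  by (simp add: add_left add_right scale_left scale_right power2_eq_square algebra_simps)

lemma cauchy_schwarz:
  assumes "x \<in> D" "y \<in> D"
  shows "(b x y)^2 \<le> b x x * b y y"
proof (rule quadratic_nonneg_imp_discriminant_le)
  show "0 \<le> b x x + 2*t*b x y + t^2 * b y y" for t
    using nonneg[of "x + t *\<^sub>R y"] quadratic_expansion[OF assms]
      subspace_add[OF subspace] subspace_scale[OF subspace] assms by simp
qed (simp add: nonneg assms)

lemma cauchy_schwarz_abs:
  assumes "x \<in> D" "y \<in> D"
  shows "\<bar>b x y\<bar> \<le> sqrt (b x x) * sqrt (b y y)"
  using real_sqrt_le_mono[OF cauchy_schwarz[OF assms]] by (simp add: real_sqrt_mult)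

text \<open>Dirichlet's principle: the representative of a bounded linear functional \<open>l\<close> is found
  as a minimiser of the energy \<open>b x x - 2 l x\<close>.\<close>

definition energy :: "('a \<Rightarrow> real) \<Rightarrow> 'a \<Rightarrow> real" where
  "energy l x = b x x - 2 * l x"

context
  fixes l :: "'a \<Rightarrow> real" and C :: real
  assumes l_add: "\<And>x y. x \<in> D \<Longrightarrow> y \<in> D \<Longrightarrow> l (x + y) = l x + l y"
    and l_scale: "\<And>c x. x \<in> D \<Longrightarrow> l (c *\<^sub>R x) = c * l x"
    and l_bound: "\<And>x. x \<in> D \<Longrightarrow> \<bar>l x\<bar> \<le> C * sqrt (b x x)"
begin

lemma energy_lower_bound: "x \<in> D \<Longrightarrow> - (C^2) \<le> energy l x"
  using l_bound[of x] nonneg[of x] sum_power2_ge_zero[of "sqrt (b x x) - C" 0]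
  by (simp add: energy_def power2_eq_square algebra_simps)

lemma energy_parallelogram:
  assumes "x \<in> D" "y \<in> D"
  shows "energy l x + energy l y
           = 2 * energy l ((1/2) *\<^sub>R (x + y)) + (1/2) * b (x - y) (x - y)"
proof -
  have "b ((1/2) *\<^sub>R (x + y)) ((1/2) *\<^sub>R (x + y)) = (1/4) * (b x x + 2 * b x y + b y y)"
    using assms subspace_add[OF subspace] subspace_scale[OF subspace] sym[OF assms]
    by (simp add: scale_left scale_right add_left add_right; simp add: field_simps)
  moreover have "b (x - y) (x - y) = b x x - 2 * b x y + b y y"
    using assms subspace_diff[OF subspace] sym[OF assms] by (simp add: diff_left diff_right)
  moreover have "l ((1/2) *\<^sub>R (x + y)) = (1/2) * (l x + l y)"
    using assms subspace_add[OF subspace] by (simp add: l_scale l_add)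
  ultimately show ?thesis by (simp add: energy_def algebra_simps)
qed

lemma energy_add:
  assumes "x \<in> D" "k \<in> D"
  shows "energy l (x + k) = energy l x + 2 * b x k + b k k - 2 * l k"
  using quadratic_expansion[OF assms, of 1] by (simp add: energy_def l_add assms)

lemma minimizer_represents:
  assumes uD: "u \<in> D" and min: "\<And>x. x \<in> D \<Longrightarrow> energy l u \<le> energy l x"
    and vD: "v \<in> D"
  shows "b u v = l v"
proof -
  have "0 \<le> 2 * t * (b u v - l v) + t^2 * b v v" for t
  proof -
    have tv: "t *\<^sub>R v \<in> D" using vD subspace_scale[OF subspace] by blast
    have "energy l (u + t *\<^sub>R v) = energy l u + 2 * t * (b u v - l v) + t^2 * b v v"
      using energy_add[OF uD tv] scale_left[OF vD tv, of t] scale_right[OF vD vD, of t]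
        scale_right[OF vD uD, of t] l_scale[OF vD, of t]
      by (simp add: power2_eq_square algebra_simps)
    with min[of "u + t *\<^sub>R v"] show ?thesis
      using uD tv subspace_add[OF subspace] by simp
  qed
  then have "(b u v - l v)^2 \<le> 0"
    using quadratic_nonneg_imp_discriminant_le[of 0 "b u v - l v" "b v v"] nonneg[OF vD] by simp
  then show ?thesis by simp
qed

lemma minimizing_sequence_Cauchy:
  assumes sD: "\<And>n. s n \<in> D" and m: "\<And>x. x \<in> D \<Longrightarrow> m \<le> energy l x"
    and sm: "\<And>n. energy l (s n) < m + 1 / (real n + 1)"
  shows "\<forall>e>0. \<exists>N. \<forall>i\<ge>N. \<forall>j\<ge>N. b (s i - s j) (s i - s j) < e"
proof (intro allI impI)
  fix e :: real assume "e > 0"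
  obtain N :: nat where N: "4 / e < real N" using reals_Archimedean2 by blast
  show "\<exists>N. \<forall>i\<ge>N. \<forall>j\<ge>N. b (s i - s j) (s i - s j) < e"
  proof (intro exI allI impI)
    fix i j assume ij: "N \<le> i" "N \<le> j"
    have "m \<le> energy l ((1/2) *\<^sub>R (s i + s j))"
      using m sD subspace_add[OF subspace] subspace_scale[OF subspace] by blast
    with energy_parallelogram[OF sD sD, of i j] sm[of i] sm[of j]
    have "b (s i - s j) (s i - s j) < 2 / (real i + 1) + 2 / (real j + 1)" by linarith
    also have "\<dots> \<le> 2 / (real N + 1) + 2 / (real N + 1)"
      using ij by (intro add_mono) (simp_all add: frac_le)
    also have "\<dots> = 4 / (real N + 1)" by simp
    also have "\<dots> < e" using N \<open>e > 0\<close> by (simp add: field_simps)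
    finally show "b (s i - s j) (s i - s j) < e" .
  qed
qed

lemma energy_le_limit:
  assumes uD: "u \<in> D" and sD: "\<And>n. s n \<in> D"
    and lim: "(\<lambda>n. b (s n - u) (s n - u)) \<longlonglongrightarrow> 0"
    and sm: "\<And>n. energy l (s n) < m + 1 / (real n + 1)"
  shows "energy l u \<le> m"
proof -
  define h where "h n = sqrt (b (s n - u) (s n - u))" for n
  show ?thesis
  proof (rule tendsto_le[OF _ _ tendsto_const])
    have "(\<lambda>n. 1 / (real n + 1)) \<longlonglongrightarrow> 0"
      using LIMSEQ_inverse_real_of_nat by (simp add: inverse_eq_divide add.commute)
    then have "(\<lambda>n. m + 1 / (real n + 1) + 2 * (sqrt (b u u) + C) * h n)
                 \<longlonglongrightarrow> m + 0 + 2 * (sqrt (b u u) + C) * 0"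
      unfolding h_def using tendsto_real_sqrt[OF lim] by (intro tendsto_intros) auto
    then show "(\<lambda>n. m + 1 / (real n + 1) + 2 * (sqrt (b u u) + C) * h n) \<longlonglongrightarrow> m"
      by simp
    show "\<forall>\<^sub>F n in sequentially. energy l u \<le> m + 1 / (real n + 1) + 2 * (sqrt (b u u) + C) * h n"
    proof (rule always_eventually, rule allI)
      fix n
      define k where "k = s n - u"
      have kD: "k \<in> D" unfolding k_def using uD sD subspace_diff[OF subspace] by blast
      have "energy l (s n) = energy l u + 2 * b u k + b k k - 2 * l k"
        using energy_add[OF uD kD] by (simp add: k_def)
      moreover have "- b u k \<le> sqrt (b u u) * h n"
        using cauchy_schwarz_abs[OF uD kD] by (simp add: h_def k_def)
      moreover have "l k \<le> C * h n" using l_bound[OF kD] by (simp add: h_def k_def)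
      moreover have "0 \<le> b k k" using nonneg[OF kD] .
      ultimately show "energy l u \<le> m + 1 / (real n + 1) + 2 * (sqrt (b u u) + C) * h n"
        using sm[of n] by (simp add: algebra_simps)
    qed
  qed simp
qed

end

end

locale complete_nonneg_sym_form = nonneg_sym_form +
  assumes complete: "\<And>s. (\<forall>n. s n \<in> D) \<Longrightarrow>
      (\<forall>e>0. \<exists>N. \<forall>m\<ge>N. \<forall>n\<ge>N. b (s m - s n) (s m - s n) < e) \<Longrightarrow>
      \<exists>u\<in>D. (\<lambda>n. b (s n - u) (s n - u)) \<longlonglongrightarrow> 0"
begin

context
  fixes l :: "'a \<Rightarrow> real" and C :: real
  assumes l_add: "\<And>x y. x \<in> D \<Longrightarrow> y \<in> D \<Longrightarrow> l (x + y) = l x + l y"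
    and l_scale: "\<And>c x. x \<in> D \<Longrightarrow> l (c *\<^sub>R x) = c * l x"
    and l_bound: "\<And>x. x \<in> D \<Longrightarrow> \<bar>l x\<bar> \<le> C * sqrt (b x x)"
begin

lemma energy_minimizer_exists: "\<exists>u\<in>D. \<forall>x\<in>D. energy l u \<le> energy l x"
proof -
  note l_facts = l_add l_scale l_bound
  define m where "m = Inf (energy l ` D)"
  have bdd: "bdd_below (energy l ` D)"
    using energy_lower_bound[OF l_facts] by (auto intro!: bdd_belowI[where m="- (C^2)"])
  have ne: "energy l ` D \<noteq> {}" using subspace_0[OF subspace] by auto
  have m_le: "m \<le> energy l x" if "x \<in> D" for x
    unfolding m_def using bdd that by (simp add: cInf_lower)
  have "\<exists>x\<in>D. energy l x < m + 1 / (real n + 1)" for n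
    using cInf_lessD[OF ne, of "m + 1 / (real n + 1)"] unfolding m_def by auto
  then obtain s where sD: "\<And>n. s n \<in> D" and sm: "\<And>n. energy l (s n) < m + 1 / (real n + 1)"
    by metis
  obtain u where uD: "u \<in> D" and lim: "(\<lambda>n. b (s n - u) (s n - u)) \<longlonglongrightarrow> 0"
    using complete minimizing_sequence_Cauchy[OF l_facts sD m_le sm] sD by blast
  then show ?thesis
    using energy_le_limit[OF l_facts uD sD lim sm] m_le by force
qed

theorem representation: "\<exists>u\<in>D. \<forall>v\<in>D. b u v = l v"
  using energy_minimizer_exists minimizer_represents[OF l_add l_scale l_bound] by blast

end

end

section \<open>Bounded selfadjoint operators on real Hilbert spaces\<close>

definition selfadjoint :: "('a::real_inner \<Rightarrow> 'a) \<Rightarrow> bool" where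
  "selfadjoint T \<longleftrightarrow> (\<forall>x y. inner (T x) y = inner x (T y))"

lemma selfadjointD: "selfadjoint T \<Longrightarrow> inner (T x) y = inner x (T y)"
  by (simp add: selfadjoint_def)

lemma selfadjoint_minus_scaleR:
  "selfadjoint T \<Longrightarrow> selfadjoint (\<lambda>x. T x - c *\<^sub>R x)"
  by (simp add: selfadjoint_def inner_diff_left inner_diff_right)

lemma closed_norm_le_selfadjoint:
  fixes T :: "'a::real_inner \<Rightarrow> 'a"
  assumes T: "selfadjoint T" and "0 \<le> c"
  shows "closed {y. norm (T y) \<le> c}"
proof -
  have "{y. norm (T y) \<le> c} = (\<Inter>x. {y. \<bar>inner y (T x)\<bar> \<le> c * norm x})"
  proof (intro set_eqI iffI)
    fix y assume "y \<in> {y. norm (T y) \<le> c}"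
    then have "\<bar>inner y (T x)\<bar> \<le> c * norm x" for x
      using Cauchy_Schwarz_ineq2[of "T y" x] mult_right_mono[of "norm (T y)" c "norm x"]
      by (simp add: selfadjointD[OF T])
    then show "y \<in> (\<Inter>x. {y. \<bar>inner y (T x)\<bar> \<le> c * norm x})" by blast
  next
    fix y assume "y \<in> (\<Inter>x. {y. \<bar>inner y (T x)\<bar> \<le> c * norm x})"
    then have "\<bar>inner y (T (T y))\<bar> \<le> c * norm (T y)" by blast
    then have "norm (T y) * norm (T y) \<le> c * norm (T y)"
      by (simp add: selfadjointD[OF T, symmetric] power2_norm_eq_inner[symmetric]
          power2_eq_square)
    then show "y \<in> {y. norm (T y) \<le> c}"
      using \<open>0 \<le> c\<close> by (cases "T y = 0") (auto simp: mult_le_cancel_right)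
  qed
  then show ?thesis
    by (simp only:) (intro closed_INT ballI closed_Collect_le continuous_intros)
qed

lemma bounded_linear_of_bounded_on_ball:
  fixes T :: "'a::real_normed_vector \<Rightarrow> 'b::real_normed_vector"
  assumes lin: "linear T" and "e > 0" and small: "\<And>z. norm z < e \<Longrightarrow> norm (T z) \<le> M"
  shows "bounded_linear T"
proof (rule bounded_linear_intro[where K = "2 * M / e"])
  fix y
  show "norm (T y) \<le> norm y * (2 * M / e)"
  proof (cases "y = 0")
    case True
    then show ?thesis using lin by (simp add: linear_0)
  next
    case False
    define c where "c = e / (2 * norm y)"
    have "c > 0" unfolding c_def using \<open>e > 0\<close> False by simp
    have "norm (c *\<^sub>R y) < e" unfolding c_def using \<open>e > 0\<close> False by simp
    then have "norm (T (c *\<^sub>R y)) \<le> M" by (rule small)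
    then have "c * norm (T y) \<le> M" using lin \<open>c > 0\<close> by (simp add: linear_scale)
    then have "norm (T y) \<le> M / c" using \<open>c > 0\<close> by (simp add: field_simps)
    also have "M / c = norm y * (2 * M / e)"
      unfolding c_def using \<open>e > 0\<close> False by (simp add: field_simps)
    finally show ?thesis .
  qed
qed (use lin in \<open>simp_all add: linear_add linear_scale\<close>)

text \<open>Hellinger--Toeplitz: by Baire's theorem one of the closed sets
  \<open>{y. norm (T y) \<le> n}\<close> contains a ball.\<close>

theorem hellinger_toeplitz:
  fixes T :: "'a::{real_inner,complete_space} \<Rightarrow> 'a"
  assumes lin: "linear T" and T: "selfadjoint T"
  shows "bounded_linear T"
proof -
  define F where "F n = {y. norm (T y) \<le> real n}" for n :: nat
  have "\<exists>n. interior (F n) \<noteq> {}"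
  proof (rule ccontr)
    assume "\<not> (\<exists>n. interior (F n) \<noteq> {})"
    then have "euclidean interior_of \<Union>(range F) = {}"
      unfolding F_def
      by (intro Baire_category_alt)
        (auto simp: completely_metrizable_space_euclidean closed_norm_le_selfadjoint[OF T])
    moreover have "\<Union>(range F) = UNIV"
      unfolding F_def by (auto intro: real_arch_simple)
    ultimately show False by simp
  qed
  then obtain n y0 where "y0 \<in> interior (F n)" by blast
  then obtain e where "e > 0" and ball: "ball y0 e \<subseteq> F n"
    using open_contains_ball open_interior interior_subset by (metis subset_trans)
  have "norm (T z) \<le> 2 * real n" if "norm z < e" for z
  proof -
    have "y0 + z \<in> F n" "y0 \<in> F n" using ball that \<open>e > 0\<close> by (auto simp: dist_norm)
    moreover have "T z = T (y0 + z) - T y0" using lin by (simp add: linear_add)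
    ultimately show ?thesis
      unfolding F_def using norm_triangle_ineq4[of "T (y0 + z)" "T y0"] by simp
  qed
  then show ?thesis using bounded_linear_of_bounded_on_ball[OF lin \<open>e > 0\<close>] by blast
qed

lemma linear_inv_of_bij:
  fixes Q :: "'a::real_vector \<Rightarrow> 'a"
  assumes "linear Q" "bij Q"
  shows "linear (inv Q)"
proof (rule linearI)
  have sj: "surj Q" and ij: "inj Q" using assms(2) by (auto simp: bij_def)
  fix x y :: 'a and c :: real
  have "Q (inv Q x + inv Q y) = x + y" using assms(1) sj by (simp add: linear_add surj_f_inv_f)
  then show "inv Q (x + y) = inv Q x + inv Q y" using ij by (metis inv_f_f)
  have "Q (c *\<^sub>R inv Q x) = c *\<^sub>R x" using assms(1) sj by (simp add: linear_scale surj_f_inv_f)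
  then show "inv Q (c *\<^sub>R x) = c *\<^sub>R inv Q x" using ij by (metis inv_f_f)
qed

lemma selfadjoint_inv_of_bij:
  assumes "selfadjoint Q" "bij Q"
  shows "selfadjoint (inv Q)"
  unfolding selfadjoint_def
proof (intro allI)
  fix x y
  have "surj Q" using \<open>bij Q\<close> by (simp add: bij_def)
  then show "inner (inv Q x) y = inner x (inv Q y)"
    using selfadjointD[OF assms(1), of "inv Q x" "inv Q y"] by (simp add: surj_f_inv_f)
qed

lemma bij_selfadjoint_bounded_below:
  fixes Q :: "'a::{real_inner,complete_space} \<Rightarrow> 'a"
  assumes "linear Q" "bij Q" "selfadjoint Q"
  obtains K where "K > 0" "\<And>y. norm y \<le> K * norm (Q y)"
proof -
  have "bounded_linear (inv Q)"
    using hellinger_toeplitz linear_inv_of_bij selfadjoint_inv_of_bij assms by blast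
  then obtain K where "K > 0" and K: "\<And>y. norm (inv Q y) \<le> norm y * K"
    using bounded_linear.pos_bounded by blast
  moreover have "norm y \<le> K * norm (Q y)" for y
    using K[of "Q y"] \<open>bij Q\<close> by (simp add: bij_is_inj mult.commute)
  ultimately show thesis using that by blast
qed

lemma complete_nonneg_sym_form_bounded_below:
  fixes S :: "'a::{real_inner,complete_space} \<Rightarrow> 'a"
  assumes S: "bounded_linear S" and e: "e > 0" and below: "\<And>x. e * norm x \<le> norm (S x)"
  shows "complete_nonneg_sym_form UNIV (\<lambda>x z. inner (S x) (S z))"
proof unfold_locales
  have lin: "linear S" using S by (rule bounded_linear.linear)
  fix s :: "nat \<Rightarrow> 'a"
  assume Cauchy_S: "\<forall>e>0. \<exists>N. \<forall>m\<ge>N. \<forall>n\<ge>N. inner (S (s m - s n)) (S (s m - s n)) < e"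
  have "Cauchy s"
  proof (rule CauchyI)
    fix r :: real assume r: "r > 0"
    obtain N where N: "\<forall>m\<ge>N. \<forall>n\<ge>N. inner (S (s m - s n)) (S (s m - s n)) < (e * r)^2"
      using Cauchy_S e r by (meson zero_less_power mult_pos_pos)
    show "\<exists>N. \<forall>m\<ge>N. \<forall>n\<ge>N. norm (s m - s n) < r"
    proof (intro exI allI impI)
      fix m n assume "N \<le> m" "N \<le> n"
      then have "(norm (S (s m - s n)))^2 < (e * r)^2" using N by (simp add: power2_norm_eq_inner)
      then have "norm (S (s m - s n)) < e * r" using e r by (simp add: power_less_imp_less_base)
      then have "e * norm (s m - s n) < e * r" using below[of "s m - s n"] by linarith
      then show "norm (s m - s n) < r" using e by simp
    qed
  qed
  then obtain u where "s \<longlonglongrightarrow> u" using Cauchy_convergent_iff convergent_def by blast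
  then have "(\<lambda>n. S (s n - u)) \<longlonglongrightarrow> S (u - u)"
    by (intro bounded_linear.tendsto[OF S] tendsto_intros)
  then have "(\<lambda>n. (norm (S (s n - u)))^2) \<longlonglongrightarrow> 0"
    using tendsto_norm_zero tendsto_power[of _ 0 _ 2] lin by (fastforce simp: linear_0)
  then show "\<exists>u\<in>UNIV. (\<lambda>n. inner (S (s n - u)) (S (s n - u))) \<longlonglongrightarrow> 0"
    by (auto simp: power2_norm_eq_inner)
qed (use bounded_linear.linear[OF S] in
      \<open>auto simp: linear_add linear_scale inner_add_left inner_add_right inner_commute\<close>)

lemma bounded_below_selfadjoint_surj:
  fixes S :: "'a::{real_inner,complete_space} \<Rightarrow> 'a"
  assumes S: "bounded_linear S" "selfadjoint S"
    and e: "e > 0" and below: "\<And>x. e * norm x \<le> norm (S x)"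
  shows "surj S"
proof -
  interpret complete_nonneg_sym_form UNIV "\<lambda>x z. inner (S x) (S z)"
    using complete_nonneg_sym_form_bounded_below[OF S(1) e below] .
  have lin: "linear S" using S(1) by (rule bounded_linear.linear)
  show ?thesis
    unfolding surj_def
  proof
    fix y
    obtain u where u: "\<And>v. inner (S u) (S v) = inner y (S v)"
      using representation[of "\<lambda>v. inner y (S v)" "norm y"] Cauchy_Schwarz_ineq2[of y]
      by (auto simp: lin linear_add linear_scale inner_add_right norm_eq_sqrt_inner)
    have "inner (S (S u - y)) v = 0" for v
      using u[of v] by (simp add: selfadjointD[OF S(2)] inner_diff_left)
    then have "S (S u - y) = 0" using inner_eq_zero_iff by blast
    then have "S u = y" using below[of "S u - y"] e by (simp add: mult_le_0_iff)
    then show "\<exists>u. y = S u" by metis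
  qed
qed

text \<open>Otherwise \<open>R - \<mu>\<close> is bounded below, hence injective and, being selfadjoint,
  surjective.\<close>

lemma approx_eigenvector:
  fixes R :: "'a::{real_inner,complete_space} \<Rightarrow> 'a"
  assumes R: "bounded_linear R" "selfadjoint R"
    and not_bij: "\<not> bij (\<lambda>x. R x - \<mu> *\<^sub>R x)" and e: "e > 0"
  obtains x where "norm x = 1" "norm (R x - \<mu> *\<^sub>R x) < e"
proof (rule ccontr)
  assume "\<not> thesis"
  with that have far: "norm x = 1 \<Longrightarrow> e \<le> norm (R x - \<mu> *\<^sub>R x)" for x by force
  define S where "S x = R x - \<mu> *\<^sub>R x" for x
  have S: "bounded_linear S" "selfadjoint S"
    unfolding S_def using R selfadjoint_minus_scaleR
    by (auto intro: bounded_linear_sub bounded_linear_scaleR_right bounded_linear_ident)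
  have lin: "linear S" using S(1) by (rule bounded_linear.linear)
  have below: "e * norm x \<le> norm (S x)" for x
  proof (cases "x = 0")
    case False
    have "e \<le> norm (S ((1 / norm x) *\<^sub>R x))" unfolding S_def using False by (intro far) simp
    also have "\<dots> = norm (S x) / norm x" using lin by (simp add: linear_scale)
    finally show ?thesis using False by (simp add: field_simps)
  qed (use lin in \<open>simp add: linear_0\<close>)
  have "inj S"
  proof (rule injI)
    fix x y assume "S x = S y"
    then show "x = y" using below[of "x - y"] e lin by (simp add: linear_diff mult_le_0_iff)
  qed
  with bounded_below_selfadjoint_surj[OF S e below] have "bij S" by (simp add: bij_def)
  with not_bij show False unfolding S_def by simp
qed

lemma nonneg_sym_form_positive_selfadjoint:
  fixes Q :: "'a::real_inner \<Rightarrow> 'a"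
  assumes "linear Q" "selfadjoint Q" and pos: "\<And>x. 0 \<le> inner (Q x) x"
  shows "nonneg_sym_form UNIV (\<lambda>x z. inner (Q x) z)"
proof unfold_locales
  show "inner (Q x) y = inner (Q y) x" for x y
    using selfadjointD[OF assms(2), of x y] by (simp add: inner_commute)
qed (use assms in \<open>simp_all add: linear_add linear_scale inner_add_left\<close>)

lemma norm_sq_le_positive_selfadjoint:
  fixes Q :: "'a::real_inner \<Rightarrow> 'a"
  assumes Q: "linear Q" "selfadjoint Q" and pos: "\<And>x. 0 \<le> inner (Q x) x"
    and L: "\<And>y. norm (Q y) \<le> L * norm y"
  shows "(norm (Q y))^2 \<le> L * inner (Q y) y"
proof (cases "Q y = 0")
  case True
  then show ?thesis using L[of y] pos[of y] by (simp add: order_trans[OF norm_ge_zero])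
next
  case False
  interpret nonneg_sym_form UNIV "\<lambda>x z. inner (Q x) z"
    using nonneg_sym_form_positive_selfadjoint[OF Q pos] .
  have "((norm (Q y))^2)^2 = (inner (Q y) (Q y))^2" by (simp add: power2_norm_eq_inner)
  also have "\<dots> \<le> inner (Q y) y * inner (Q (Q y)) (Q y)" using cauchy_schwarz[of y "Q y"] by simp
  also have "\<dots> \<le> inner (Q y) y * (L * (norm (Q y))^2)"
  proof (intro mult_left_mono pos)
    have "inner (Q (Q y)) (Q y) \<le> norm (Q (Q y)) * norm (Q y)"
      using Cauchy_Schwarz_ineq2 abs_ge_self order_trans by blast
    also have "\<dots> \<le> (L * norm (Q y)) * norm (Q y)" by (intro mult_right_mono L) auto
    finally show "inner (Q (Q y)) (Q y) \<le> L * (norm (Q y))^2" by (simp add: power2_eq_square)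
  qed
  finally have "(norm (Q y))^2 * (norm (Q y))^2 \<le> (L * inner (Q y) y) * (norm (Q y))^2"
    by (simp add: power2_eq_square algebra_simps)
  moreover have "(norm (Q y))^2 > 0" using False by simp
  ultimately show ?thesis by (rule mult_right_le_imp_le)
qed

text \<open>A bounded inverse is incompatible with \<open>(Q y, y)\<close> being small on unit vectors, since
  \<open>\<parallel>Q y\<parallel>\<^sup>2 \<le> \<parallel>Q\<parallel> (Q y, y)\<close> for positive \<open>Q\<close>.\<close>

lemma positive_selfadjoint_not_bij:
  fixes Q :: "'a::{real_inner,complete_space} \<Rightarrow> 'a"
  assumes Q: "bounded_linear Q" "selfadjoint Q" and pos: "\<And>y. 0 \<le> inner (Q y) y"
    and small: "\<And>\<epsilon>. \<epsilon> > 0 \<Longrightarrow> \<exists>y. norm y = 1 \<and> inner (Q y) y < \<epsilon>"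
  shows "\<not> bij Q"
proof
  assume "bij Q"
  have lin: "linear Q" using Q(1) by (rule bounded_linear.linear)
  obtain K where "K > 0" and K: "\<And>y. norm y \<le> K * norm (Q y)"
    using bij_selfadjoint_bounded_below[OF lin \<open>bij Q\<close> Q(2)] by blast
  obtain L where "L > 0" and L: "\<And>y. norm (Q y) \<le> norm y * L"
    using bounded_linear.pos_bounded[OF Q(1)] by blast
  define \<epsilon> where "\<epsilon> = 1 / (K^2 * L + 1)"
  have "\<epsilon> > 0" unfolding \<epsilon>_def using \<open>L > 0\<close> by (simp add: add_nonneg_pos)
  then obtain y where y: "norm y = 1" and "inner (Q y) y < \<epsilon>" using small by blast
  have "1 = (norm y)^2" using y by simp
  also have "\<dots> \<le> K^2 * (norm (Q y))^2"
    using K[of y] by (simp add: power_mult_distrib[symmetric] power_mono)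
  also have "\<dots> \<le> K^2 * (L * inner (Q y) y)"
    using norm_sq_le_positive_selfadjoint[OF lin Q(2) pos, of L y] L
    by (intro mult_left_mono) (simp_all add: mult.commute)
  also have "\<dots> \<le> K^2 * (L * \<epsilon>)"
    using \<open>inner (Q y) y < \<epsilon>\<close> \<open>L > 0\<close> by (intro mult_left_mono) auto
  also have "\<dots> = K^2 * L / (K^2 * L + 1)" unfolding \<epsilon>_def by simp
  also have "\<dots> < 1" using \<open>L > 0\<close> by (simp add: divide_less_eq add_nonneg_pos)
  finally show False by simp
qed

text \<open>If \<open>r\<close> is the minimum modulus of \<open>S\<close>, then \<open>S\<^sup>2 - r\<^sup>2 = (S - r)(S + r)\<close> is positive
  with approximate kernel vectors.\<close>

lemma not_bij_at_minimum_modulus: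
  fixes S :: "'a::{real_inner,complete_space} \<Rightarrow> 'a"
  assumes S: "bounded_linear S" "selfadjoint S"
    and below: "\<And>y. r^2 * (norm y)^2 \<le> (norm (S y))^2"
    and attained: "\<And>\<epsilon>. \<epsilon> > 0 \<Longrightarrow> \<exists>y. norm y = 1 \<and> (norm (S y))^2 < r^2 + \<epsilon>"
  shows "\<not> bij (\<lambda>y. S y - r *\<^sub>R y) \<or> \<not> bij (\<lambda>y. S y + r *\<^sub>R y)"
proof -
  define Q where "Q y = S (S y) - r^2 *\<^sub>R y" for y
  have Q_form: "inner (Q y) y = (norm (S y))^2 - r^2 * (norm y)^2" for y
    unfolding Q_def by (simp add: inner_diff_left selfadjointD[OF S(2)] power2_norm_eq_inner)
  have "bounded_linear Q" unfolding Q_def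
    by (intro bounded_linear_sub bounded_linear_compose[OF S(1) S(1)]
        bounded_linear_scaleR_right bounded_linear_ident)
  moreover have "selfadjoint Q"
    unfolding Q_def selfadjoint_def by (simp add: inner_diff_left inner_diff_right selfadjointD[OF S(2)])
  moreover have "0 \<le> inner (Q y) y" for y using below[of y] by (simp add: Q_form)
  moreover have "\<exists>y. norm y = 1 \<and> inner (Q y) y < \<epsilon>" if "\<epsilon> > 0" for \<epsilon>
    using attained[OF that] by (auto simp: Q_form)
  ultimately have "\<not> bij Q" by (rule positive_selfadjoint_not_bij)
  moreover have "Q = (\<lambda>y. S y - r *\<^sub>R y) \<circ> (\<lambda>y. S y + r *\<^sub>R y)"
    unfolding Q_def using bounded_linear.linear[OF S(1)]
    by (auto simp: linear_add linear_scale algebra_simps power2_eq_square)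
  ultimately show ?thesis using bij_comp by metis
qed

lemma minimum_modulus:
  fixes S :: "'a::real_normed_vector \<Rightarrow> 'b::real_normed_vector"
  assumes lin: "linear S" and nontrivial: "\<exists>x::'a. x \<noteq> 0"
  obtains r where "0 \<le> r" "\<And>y. r^2 * (norm y)^2 \<le> (norm (S y))^2"
    "\<And>\<epsilon>. \<epsilon> > 0 \<Longrightarrow> \<exists>y. norm y = 1 \<and> (norm (S y))^2 < r^2 + \<epsilon>"
proof -
  define N where "N = (\<lambda>y. (norm (S y))^2) ` sphere 0 1"
  obtain x :: 'a where "x \<noteq> 0" using nontrivial by blast
  then have "(1 / norm x) *\<^sub>R x \<in> sphere 0 1" by simp
  then have "N \<noteq> {}" unfolding N_def by blast
  have bdd: "bdd_below N" unfolding N_def by (rule bdd_belowI[where m = 0]) auto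
  have Inf_nonneg: "0 \<le> Inf N" using \<open>N \<noteq> {}\<close> unfolding N_def by (intro cInf_greatest) auto
  have Inf_le: "Inf N \<le> (norm (S y))^2" if "norm y = 1" for y
    unfolding N_def using bdd that by (intro cInf_lower) (auto simp: N_def)
  define r where "r = sqrt (Inf N)"
  have r2: "r^2 = Inf N" unfolding r_def using Inf_nonneg by simp
  show thesis
  proof (rule that)
    show "0 \<le> r" unfolding r_def using Inf_nonneg by simp
    show "r^2 * (norm y)^2 \<le> (norm (S y))^2" for y
    proof (cases "y = 0")
      case False
      have "r^2 \<le> (norm (S ((1 / norm y) *\<^sub>R y)))^2" unfolding r2 using False by (intro Inf_le) simp
      also have "norm (S ((1 / norm y) *\<^sub>R y)) = norm (S y) / norm y"
        using lin by (simp add: linear_scale)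
      finally show ?thesis using False by (simp add: power_divide pos_le_divide_eq)
    qed simp
    show "\<exists>y. norm y = 1 \<and> (norm (S y))^2 < r^2 + \<epsilon>" if "\<epsilon> > 0" for \<epsilon>
      using cInf_lessD[OF \<open>N \<noteq> {}\<close>, of "Inf N + \<epsilon>"] that unfolding r2 by (auto simp: N_def)
  qed
qed

lemma spectrum_near_approx_eigenvalue:
  fixes R :: "'a::{real_inner,complete_space} \<Rightarrow> 'a"
  assumes R: "bounded_linear R" "selfadjoint R" and "x \<noteq> 0"
  obtains \<mu> where "\<not> bij (\<lambda>y. R y - \<mu> *\<^sub>R y)" "\<bar>t - \<mu>\<bar> \<le> norm (R x - t *\<^sub>R x) / norm x"
proof -
  define S where "S y = R y - t *\<^sub>R y" for y
  have S: "bounded_linear S" "selfadjoint S"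
    unfolding S_def using R selfadjoint_minus_scaleR
    by (auto intro: bounded_linear_sub bounded_linear_scaleR_right bounded_linear_ident)
  obtain r where "0 \<le> r" and below: "\<And>y. r^2 * (norm y)^2 \<le> (norm (S y))^2"
    and attained: "\<And>\<epsilon>. \<epsilon> > 0 \<Longrightarrow> \<exists>y. norm y = 1 \<and> (norm (S y))^2 < r^2 + \<epsilon>"
    using minimum_modulus[OF bounded_linear.linear[OF S(1)]] \<open>x \<noteq> 0\<close> by blast
  have "(r * norm x)^2 \<le> (norm (S x))^2" using below[of x] by (simp add: power_mult_distrib)
  then have "r * norm x \<le> norm (S x)" by (rule power2_le_imp_le) simp
  then have r_le: "r \<le> norm (S x) / norm x" using \<open>x \<noteq> 0\<close> by (simp add: field_simps)
  have "(\<lambda>y. S y - r *\<^sub>R y) = (\<lambda>y. R y - (t + r) *\<^sub>R y)"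
    and "(\<lambda>y. S y + r *\<^sub>R y) = (\<lambda>y. R y - (t - r) *\<^sub>R y)"
    unfolding S_def by (auto simp: algebra_simps)
  with not_bij_at_minimum_modulus[OF S below attained]
  consider "\<not> bij (\<lambda>y. R y - (t + r) *\<^sub>R y)" | "\<not> bij (\<lambda>y. R y - (t - r) *\<^sub>R y)" by auto
  then show ?thesis
    using that \<open>0 \<le> r\<close> r_le unfolding S_def by cases fastforce+
qed

section \<open>The resolvent of a closed nonnegative form\<close>

lemma Im_cinner: "Im (cinner w v) = inner w (scaleC \<i> v)"
proof -
  have "inner w (scaleC \<i> v) = Re (cnj (cinner (scaleC \<i> v) w))"
    by (simp add: Re_cinner cinner_commute[of w] inner_commute)
  also have "\<dots> = Im (cinner w v)" by (simp add: cinner_scaleC_left cinner_commute[of v w])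
  finally show ?thesis by simp
qed

context
  fixes D :: "'a::complex_hilbert set" and a :: "'a \<Rightarrow> 'a \<Rightarrow> complex"
  assumes form: "closed_dd_nonneg_form D a"
begin

lemma form_sesq: "sesq_form D a"
  using form by (simp add: closed_dd_nonneg_form_def)

lemma form_domain_subspace: "subspace D"
  using form_sesq scaleC_of_real[symmetric]
  unfolding subspace_def sesq_form_def csubspace_def by metis

lemma form_domain_scaleC: "x \<in> D \<Longrightarrow> scaleC c x \<in> D"
  using form_sesq by (simp add: sesq_form_def csubspace_def)

lemma form_add_left: "u \<in> D \<Longrightarrow> v \<in> D \<Longrightarrow> w \<in> D \<Longrightarrow> a (u + v) w = a u w + a v w"
  and form_add_right: "u \<in> D \<Longrightarrow> v \<in> D \<Longrightarrow> w \<in> D \<Longrightarrow> a w (u + v) = a w u + a w v"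
  and form_scaleC_left: "u \<in> D \<Longrightarrow> v \<in> D \<Longrightarrow> a (scaleC c u) v = c * a u v"
  and form_scaleC_right: "u \<in> D \<Longrightarrow> v \<in> D \<Longrightarrow> a u (scaleC c v) = cnj c * a u v"
  using form_sesq by (simp_all add: sesq_form_def)

lemma form_nonneg: "u \<in> D \<Longrightarrow> Im (a u u) = 0 \<and> 0 \<le> Re (a u u)"
  using form by (simp add: closed_dd_nonneg_form_def)

text \<open>Hermitian symmetry follows from \<open>a[u,u]\<close> being real: polarise with \<open>x + y\<close> and
  \<open>x + \<i> y\<close>.\<close>

lemma Re_form_commute:
  assumes "x \<in> D" "y \<in> D"
  shows "Re (a x y) = Re (a y x)"
proof -
  have expand: "a (x + z) (x + z) = a x x + a x z + a z x + a z z" if "z \<in> D" for z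
    using assms that subspace_add[OF form_domain_subspace]
    by (simp add: form_add_left form_add_right)
  have iy: "scaleC \<i> y \<in> D" using form_domain_scaleC assms by blast
  have "Im (a (x + scaleC \<i> y) (x + scaleC \<i> y)) = 0"
    using form_nonneg subspace_add[OF form_domain_subspace] assms iy by blast
  then have "Im (a x (scaleC \<i> y)) + Im (a (scaleC \<i> y) x) = 0"
    using expand[OF iy] form_nonneg assms iy by simp
  then show ?thesis using assms by (simp add: form_scaleC_left form_scaleC_right)
qed

definition shifted_form :: "'a \<Rightarrow> 'a \<Rightarrow> real" where
  "shifted_form u v = Re (a u v) + inner u v"

lemma shifted_form_ge_inner: "u \<in> D \<Longrightarrow> inner u u \<le> shifted_form u u"
  and shifted_form_ge_form: "u \<in> D \<Longrightarrow> Re (a u u) \<le> shifted_form u u"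
  using form_nonneg by (simp_all add: shifted_form_def)

lemma nonneg_sym_form_shifted: "nonneg_sym_form D shifted_form"
proof unfold_locales
  show "shifted_form (c *\<^sub>R x) z = c * shifted_form x z" if "x \<in> D" "z \<in> D" for c x z
    using that form_scaleC_left[of x z "complex_of_real c"]
    by (simp add: shifted_form_def scaleC_of_real algebra_simps)
  show "shifted_form (x + y) z = shifted_form x z + shifted_form y z"
    if "x \<in> D" "y \<in> D" "z \<in> D" for x y z
    using that by (simp add: shifted_form_def form_add_left inner_add_left)
  show "shifted_form x y = shifted_form y x" if "x \<in> D" "y \<in> D" for x y
    using Re_form_commute[OF that] by (simp add: shifted_form_def inner_commute)
qed (simp_all add: form_domain_subspace shifted_form_def form_nonneg)

text \<open>Closedness of the form is exactly completeness of the form norm of \<open>A + I\<close>.\<close>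

lemma complete_nonneg_sym_form_shifted: "complete_nonneg_sym_form D shifted_form"
proof (intro_locales)
  show "nonneg_sym_form D shifted_form" by (rule nonneg_sym_form_shifted)
  interpret nonneg_sym_form D shifted_form by (rule nonneg_sym_form_shifted)
  show "complete_nonneg_sym_form_axioms D shifted_form"
  proof unfold_locales
    fix s :: "nat \<Rightarrow> 'a" assume sD: "\<forall>n. s n \<in> D"
      and Cauchy_form: "\<forall>e>0. \<exists>N. \<forall>m\<ge>N. \<forall>n\<ge>N. shifted_form (s m - s n) (s m - s n) < e"
    have diffD: "s m - s n \<in> D" for m n using sD subspace_diff[OF subspace] by blast
    have "Cauchy s"
    proof (rule CauchyI)
      fix r :: real assume r: "r > 0"
      obtain N where N: "\<forall>m\<ge>N. \<forall>n\<ge>N. shifted_form (s m - s n) (s m - s n) < r^2"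
        using Cauchy_form r by (meson zero_less_power)
      show "\<exists>N. \<forall>m\<ge>N. \<forall>n\<ge>N. norm (s m - s n) < r"
      proof (intro exI allI impI)
        fix m n assume "N \<le> m" "N \<le> n"
        then have "(norm (s m - s n))^2 < r^2"
          using N shifted_form_ge_inner[OF diffD, of m n] by (fastforce simp: power2_norm_eq_inner)
        then show "norm (s m - s n) < r" using r by (simp add: power_less_imp_less_base)
      qed
    qed
    then obtain u where u: "s \<longlonglongrightarrow> u" using Cauchy_convergent_iff convergent_def by blast
    have "\<forall>e>0. \<exists>N. \<forall>m\<ge>N. \<forall>n\<ge>N. Re (a (s m - s n) (s m - s n)) < e"
      using Cauchy_form shifted_form_ge_form[OF diffD] by (meson le_less_trans)
    then have uD: "u \<in> D" and form_lim: "(\<lambda>n. Re (a (s n - u) (s n - u))) \<longlonglongrightarrow> 0"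
      using form sD u unfolding closed_dd_nonneg_form_def by blast+
    have "(\<lambda>n. (norm (s n - u))^2) \<longlonglongrightarrow> (norm (u - u))^2" by (intro tendsto_intros u)
    then have "(\<lambda>n. inner (s n - u) (s n - u)) \<longlonglongrightarrow> 0" by (simp add: power2_norm_eq_inner)
    with form_lim have "(\<lambda>n. shifted_form (s n - u) (s n - u)) \<longlonglongrightarrow> 0 + 0"
      unfolding shifted_form_def by (intro tendsto_add)
    then show "\<exists>u\<in>D. (\<lambda>n. shifted_form (s n - u) (s n - u)) \<longlonglongrightarrow> 0" using uD by auto
  qed
qed

interpretation shifted: complete_nonneg_sym_form D shifted_form
  by (rule complete_nonneg_sym_form_shifted)

lemma form_op_shifted_iff:
  "(u, f - u) \<in> form_op D a \<longleftrightarrow> u \<in> D \<and> (\<forall>v\<in>D. shifted_form u v = inner f v)"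
proof
  assume "(u, f - u) \<in> form_op D a"
  then show "u \<in> D \<and> (\<forall>v\<in>D. shifted_form u v = inner f v)"
    by (auto simp: form_op_def shifted_form_def Re_cinner inner_diff_left)
next
  assume u: "u \<in> D \<and> (\<forall>v\<in>D. shifted_form u v = inner f v)"
  have "a u v = cinner (f - u) v" if "v \<in> D" for v
  proof (rule complex_eqI)
    have "Re (a u v) + inner u v = inner f v" using u that by (simp add: shifted_form_def)
    then show "Re (a u v) = Re (cinner (f - u) v)" by (simp add: Re_cinner inner_diff_left)
    have "shifted_form u (scaleC \<i> v) = inner f (scaleC \<i> v)"
      using u that form_domain_scaleC by blast
    then show "Im (a u v) = Im (cinner (f - u) v)"
      using u that by (simp add: shifted_form_def form_scaleC_right Im_cinner inner_diff_left)
  qed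
  then show "(u, f - u) \<in> form_op D a" using u by (simp add: form_op_def)
qed

lemma shifted_form_solution_unique:
  assumes "u1 \<in> D" "u2 \<in> D"
    and "\<forall>v\<in>D. shifted_form u1 v = inner f v" "\<forall>v\<in>D. shifted_form u2 v = inner f v"
  shows "u1 = u2"
proof -
  have w: "u1 - u2 \<in> D" using assms subspace_diff[OF form_domain_subspace] by blast
  then have "shifted_form (u1 - u2) (u1 - u2) = 0" using assms by (simp add: shifted.diff_left)
  then have "inner (u1 - u2) (u1 - u2) \<le> 0" using shifted_form_ge_inner[OF w] by linarith
  then show ?thesis by (metis inner_eq_zero_iff inner_ge_zero order_antisym right_minus_eq)
qed

lemma form_resolvent_char:
  "form_resolvent D a f \<in> D \<and> (\<forall>v\<in>D. shifted_form (form_resolvent D a f) v = inner f v)"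
proof -
  have "\<bar>inner f x\<bar> \<le> norm f * sqrt (shifted_form x x)" if "x \<in> D" for x
  proof -
    have "norm x \<le> sqrt (shifted_form x x)"
      using shifted_form_ge_inner[OF that] by (simp add: norm_eq_sqrt_inner)
    then show ?thesis
      using Cauchy_Schwarz_ineq2[of f x] mult_left_mono[of _ _ "norm f"] by fastforce
  qed
  then obtain u where u: "u \<in> D" "\<forall>v\<in>D. shifted_form u v = inner f v"
    using shifted.representation[of "inner f" "norm f"] by (auto simp: inner_add_right)
  have "form_resolvent D a f = u"
    unfolding form_resolvent_def
  proof (rule the_equality)
    show "(u, f - u) \<in> form_op D a" using u form_op_shifted_iff by blast
    show "w = u" if "(w, f - w) \<in> form_op D a" for w
      using that u shifted_form_solution_unique form_op_shifted_iff by blast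
  qed
  then show ?thesis using u by simp
qed

lemma form_resolvent_in_domain: "form_resolvent D a f \<in> D"
  using form_resolvent_char by blast

lemma form_resolvent_eq:
  "v \<in> D \<Longrightarrow> Re (a (form_resolvent D a f) v) + inner (form_resolvent D a f) v = inner f v"
  using form_resolvent_char by (simp add: shifted_form_def)

lemma Re_form_resolvent:
  "Re (a (form_resolvent D a f) (form_resolvent D a f))
     = inner (f - form_resolvent D a f) (form_resolvent D a f)"
  using form_resolvent_eq[OF form_resolvent_in_domain[of f], of f] by (simp add: inner_diff_left)

lemma norm_form_resolvent_le: "norm (form_resolvent D a f) \<le> norm f"
proof -
  let ?u = "form_resolvent D a f"
  have "inner ?u ?u \<le> inner f ?u"
    using Re_form_resolvent[of f] form_nonneg[OF form_resolvent_in_domain[of f]]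
    by (simp add: inner_diff_left)
  also have "\<dots> \<le> norm f * norm ?u" using Cauchy_Schwarz_ineq2 abs_ge_self order_trans by blast
  finally have "norm ?u * norm ?u \<le> norm f * norm ?u"
    by (simp add: power2_norm_eq_inner[symmetric] power2_eq_square)
  then show ?thesis by (cases "?u = 0") (auto simp: mult_le_cancel_right)
qed

lemma bounded_linear_form_resolvent: "bounded_linear (form_resolvent D a)"
proof (rule bounded_linear_intro[where K = 1])
  let ?R = "form_resolvent D a"
  have uniq: "?R f = u" if "u \<in> D" "\<And>v. v \<in> D \<Longrightarrow> shifted_form u v = inner f v" for f u
    using shifted_form_solution_unique form_resolvent_char that by blast
  have RD: "?R f \<in> D" and R_eq: "\<And>v. v \<in> D \<Longrightarrow> shifted_form (?R f) v = inner f v" for f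
    using form_resolvent_char by auto
  show "?R (f + g) = ?R f + ?R g" for f g
    using RD subspace_add[OF form_domain_subspace]
    by (intro uniq) (simp_all add: shifted.add_left R_eq inner_add_left)
  show "?R (c *\<^sub>R f) = c *\<^sub>R ?R f" for c f
    using RD subspace_scale[OF form_domain_subspace]
    by (intro uniq) (simp_all add: shifted.scale_left R_eq)
  show "norm (?R f) \<le> norm f * 1" for f using norm_form_resolvent_le by simp
qed

lemma selfadjoint_form_resolvent: "selfadjoint (form_resolvent D a)"
  unfolding selfadjoint_def
proof (intro allI)
  fix f g
  let ?R = "form_resolvent D a"
  have "inner (?R f) g = Re (a (?R g) (?R f)) + inner (?R g) (?R f)"
    using form_resolvent_eq[OF form_resolvent_in_domain[of f], of g] by (simp add: inner_commute)
  also have "\<dots> = Re (a (?R f) (?R g)) + inner (?R f) (?R g)"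
    using Re_form_commute[OF form_resolvent_in_domain[of f] form_resolvent_in_domain[of g]]
    by (simp add: inner_commute)
  also have "\<dots> = inner f (?R g)" using form_resolvent_eq[OF form_resolvent_in_domain[of g], of f] by simp
  finally show "inner (?R f) g = inner f (?R g)" .
qed

end

section \<open>Spectral estimates\<close>

lemma real_spectrum_iff: "t \<in> real_spectrum T \<longleftrightarrow> \<not> bij (\<lambda>y. T y - t *\<^sub>R y)"
  by (simp add: real_spectrum_def cspectrum_def scaleC_of_real)

lemma dist_out_le:
  assumes "0 \<le> B" and near: "\<And>x e. x \<in> X \<Longrightarrow> e > 0 \<Longrightarrow> \<exists>y\<in>Y. \<bar>x - y\<bar> \<le> B + e"
  shows "dist_out X Y \<le> ennreal B"
  unfolding dist_out_def
proof (rule SUP_least)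
  fix x assume "x \<in> X"
  show "(INF y\<in>Y. ennreal \<bar>x - y\<bar>) \<le> ennreal B"
  proof (rule ennreal_le_epsilon)
    fix e :: real assume "0 < e"
    then obtain y where "y \<in> Y" "\<bar>x - y\<bar> \<le> B + e" using near \<open>x \<in> X\<close> by blast
    then have "(INF y\<in>Y. ennreal \<bar>x - y\<bar>) \<le> ennreal (B + e)"
      by (intro INF_lower2[of y]) (auto intro: ennreal_leI)
    then show "(INF y\<in>Y. ennreal \<bar>x - y\<bar>) \<le> ennreal B + ennreal e"
      using \<open>0 \<le> B\<close> \<open>0 < e\<close> by simp
  qed
qed

lemma coercivity_constant_pos:
  fixes d \<nu> :: real
  assumes "0 < d" "d < 1" "\<nu> < d / (1 - d)"
  shows "0 < 1 - \<nu> * (1 / d - 1)"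
proof -
  have "\<nu> * (1 / d - 1) < (d / (1 - d)) * (1 / d - 1)"
    using assms by (intro mult_strict_right_mono) auto
  also have "\<dots> = 1" using assms by (simp add: field_simps)
  finally show ?thesis by simp
qed

lemma inner_approx_eigenvector_le:
  fixes u w :: "'a::real_inner"
  assumes u: "norm u = 1" and w: "norm w \<le> 1" and err: "norm (w - t *\<^sub>R u) \<le> \<eta>"
    and d: "0 < d" "d \<le> t"
  shows "inner (u - w) w \<le> (1 / d - 1) * (norm w)^2 + \<eta> / d"
proof -
  define e where "e = w - t *\<^sub>R u"
  have t: "t > 0" using d by simp
  have \<eta>: "0 \<le> \<eta>" using order_trans[OF norm_ge_zero err] .
  have "t * inner u w = (norm w)^2 - inner e w"
    unfolding e_def by (simp add: inner_diff_left power2_norm_eq_inner)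
  then have "inner u w = ((norm w)^2 - inner e w) / t"
    using t by (simp add: field_simps)
  then have "inner (u - w) w = (1 / t - 1) * (norm w)^2 - inner e w / t"
    by (simp add: power2_norm_eq_inner diff_divide_distrib algebra_simps)
  moreover have "(1 / t - 1) * (norm w)^2 \<le> (1 / d - 1) * (norm w)^2"
    using d by (intro mult_right_mono) (auto simp: frac_le)
  moreover have "- inner e w / t \<le> \<eta> / d"
  proof -
    have "- inner e w \<le> norm e * norm w" using Cauchy_Schwarz_ineq2[of e w] by linarith
    also have "\<dots> \<le> \<eta>" using err w \<eta> mult_mono[of "norm e" \<eta> "norm w" 1] unfolding e_def by simp
    finally have "- inner e w \<le> \<eta>" .
    then have "- inner e w / t \<le> \<eta> / t" using t by (intro divide_right_mono) auto
    also have "\<dots> \<le> \<eta> / d"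
      using d \<eta> by (intro divide_left_mono) auto
    finally show ?thesis .
  qed
  ultimately show ?thesis by simp
qed

lemma approx_eigenvector_transfer:
  fixes S :: "'b::real_inner \<Rightarrow> 'b" and R :: "'a::real_inner \<Rightarrow> 'a" and J :: "'b \<Rightarrow> 'a"
    and \<nu> d :: real
  defines "\<kappa> \<equiv> 1 - \<nu> * (1 / d - 1)"
  assumes J: "linear J" "0 \<le> K" "\<And>x. norm (J x) \<le> K * norm x"
    and u: "norm u = 1" "norm (S u - t *\<^sub>R u) \<le> \<eta>"
    and contraction: "norm (S u) \<le> 1"
    and coercive: "(norm (S u))^2 \<le> (norm (J (S u)))^2 + \<nu> * inner (u - S u) (S u)"
    and comm: "norm (J (S u) - R (J u)) \<le> \<delta>"
    and d: "0 < d" "d \<le> t" and "\<eta> \<le> t" "0 \<le> \<nu>" "0 \<le> \<kappa>"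
  shows "sqrt (\<kappa> * (t - \<eta>)^2 - \<nu> * \<eta> / d) - K * \<eta> \<le> t * norm (J u)"
    and "norm (R (J u) - t *\<^sub>R J u) \<le> \<delta> + K * \<eta>"
proof -
  define w where "w = S u"
  have J_err: "norm (J (w - t *\<^sub>R u)) \<le> K * \<eta>"
    using J(3)[of "w - t *\<^sub>R u"] mult_left_mono[OF u(2) J(2)] unfolding w_def by linarith
  have "t - \<eta> \<le> norm w"
    using u norm_triangle_ineq2[of "t *\<^sub>R u" "t *\<^sub>R u - w"] d
    by (simp add: w_def norm_minus_commute)
  then have "\<kappa> * (t - \<eta>)^2 \<le> \<kappa> * (norm w)^2"
    using \<open>\<eta> \<le> t\<close> \<open>0 \<le> \<kappa>\<close> by (intro mult_left_mono power_mono) auto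
  moreover have "\<nu> * inner (u - w) w \<le> \<nu> * ((1 / d - 1) * (norm w)^2 + \<eta> / d)"
    using inner_approx_eigenvector_le[OF u(1) contraction u(2) d] \<open>0 \<le> \<nu>\<close>
    by (intro mult_left_mono) (simp_all add: w_def)
  ultimately have "\<kappa> * (t - \<eta>)^2 - \<nu> * \<eta> / d \<le> (norm (J w))^2"
    using coercive unfolding w_def[symmetric] \<kappa>_def by (simp add: algebra_simps)
  then have "sqrt (\<kappa> * (t - \<eta>)^2 - \<nu> * \<eta> / d) \<le> norm (J w)"
    using real_sqrt_le_mono by fastforce
  moreover have "J w = t *\<^sub>R J u + J (w - t *\<^sub>R u)"
    using J(1) by (simp add: linear_diff linear_scale)
  then have "norm (J w) \<le> t * norm (J u) + K * \<eta>"
    using norm_triangle_ineq[of "t *\<^sub>R J u" "J (w - t *\<^sub>R u)"] J_err d by simp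
  ultimately show "sqrt (\<kappa> * (t - \<eta>)^2 - \<nu> * \<eta> / d) - K * \<eta> \<le> t * norm (J u)"
    by linarith
  have "R (J u) - t *\<^sub>R J u = (R (J u) - J w) + J (w - t *\<^sub>R u)"
    using J(1) by (simp add: linear_diff linear_scale)
  also have "norm \<dots> \<le> \<delta> + K * \<eta>"
    using norm_triangle_ineq[of "R (J u) - J w" "J (w - t *\<^sub>R u)"] comm J_err
    by (simp add: w_def norm_minus_commute)
  finally show "norm (R (J u) - t *\<^sub>R J u) \<le> \<delta> + K * \<eta>" .
qed

lemma spectrum_transfer_at_defect:
  fixes S :: "'b::{real_inner,complete_space} \<Rightarrow> 'b"
    and R :: "'a::{real_inner,complete_space} \<Rightarrow> 'a" and J :: "'b \<Rightarrow> 'a"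
    and \<nu> d K t \<eta> \<delta> :: real
  defines "\<kappa> \<equiv> 1 - \<nu> * (1 / d - 1)"
  defines "lower \<equiv> (sqrt (\<kappa> * (t - \<eta>)^2 - \<nu> * \<eta> / d) - K * \<eta>) / t"
  assumes S: "bounded_linear S" "selfadjoint S" "\<And>u. norm (S u) \<le> norm u"
    and R: "bounded_linear R" "selfadjoint R"
    and J: "linear J" "0 \<le> K" "\<And>x. norm (J x) \<le> K * norm x"
    and coercive: "\<And>u. (norm (S u))^2 \<le> (norm (J (S u)))^2 + \<nu> * inner (u - S u) (S u)"
    and comm: "\<And>u. norm (J (S u) - R (J u)) \<le> \<delta> * norm u"
    and "0 < d" "0 \<le> \<nu>" "0 \<le> \<kappa>"
    and t: "\<not> bij (\<lambda>x. S x - t *\<^sub>R x)" "d \<le> t"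
    and \<eta>: "0 < \<eta>" "\<eta> < t" and "0 < lower"
  obtains \<mu> where "\<not> bij (\<lambda>y. R y - \<mu> *\<^sub>R y)" "\<bar>t - \<mu>\<bar> \<le> (\<delta> + K * \<eta>) / lower"
proof -
  obtain u where u: "norm u = 1" "norm (S u - t *\<^sub>R u) < \<eta>"
    using approx_eigenvector[OF S(1,2) t(1) \<open>0 < \<eta>\<close>] by blast
  have Su: "norm (S u) \<le> 1" using S(3)[of u] u(1) by simp
  have comm_u: "norm (J (S u) - R (J u)) \<le> \<delta>" using comm[of u] u(1) by simp
  note transfer = approx_eigenvector_transfer[where J=J and S=S and R=R,
      OF J u(1) less_imp_le[OF u(2)] Su coercive comm_u \<open>0 < d\<close> t(2) less_imp_le[OF \<eta>(2)]
      \<open>0 \<le> \<nu>\<close>, folded \<kappa>_def, OF \<open>0 \<le> \<kappa>\<close>]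
  have "t > 0" using \<open>0 < d\<close> t(2) by simp
  have lower_le: "lower \<le> norm (J u)"
    using transfer(1) \<open>t > 0\<close> unfolding lower_def by (simp add: divide_le_eq mult.commute)
  then have "J u \<noteq> 0" using \<open>0 < lower\<close> by auto
  then obtain \<mu> where \<mu>: "\<not> bij (\<lambda>y. R y - \<mu> *\<^sub>R y)"
      and near: "\<bar>t - \<mu>\<bar> \<le> norm (R (J u) - t *\<^sub>R J u) / norm (J u)"
    using spectrum_near_approx_eigenvalue[OF R] by blast
  note near
  also have "norm (R (J u) - t *\<^sub>R J u) / norm (J u) \<le> (\<delta> + K * \<eta>) / lower"
    using transfer(2) lower_le \<open>0 < lower\<close> order_trans[OF norm_ge_zero transfer(2)]
    by (intro frac_le) auto
  finally show thesis using that \<mu> by blast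
qed

text \<open>As the defect \<open>\<eta>\<close> tends to \<open>0\<close>, the bound \<open>(\<delta> + K \<eta>) / lower\<close> above tends to
  \<open>\<delta> / sqrt \<kappa>\<close>.\<close>

lemma spectrum_transfer:
  fixes S :: "'b::{real_inner,complete_space} \<Rightarrow> 'b"
    and R :: "'a::{real_inner,complete_space} \<Rightarrow> 'a" and J :: "'b \<Rightarrow> 'a"
    and \<nu> d :: real
  defines "\<kappa> \<equiv> 1 - \<nu> * (1 / d - 1)"
  assumes S: "bounded_linear S" "selfadjoint S" "\<And>u. norm (S u) \<le> norm u"
    and R: "bounded_linear R" "selfadjoint R" and J: "bounded_linear J"
    and coercive: "\<And>u. (norm (S u))^2 \<le> (norm (J (S u)))^2 + \<nu> * inner (u - S u) (S u)"
    and comm: "\<And>u. norm (J (S u) - R (J u)) \<le> \<delta> * norm u"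
    and "0 < d" "0 \<le> \<nu>" "0 < \<kappa>"
    and t: "\<not> bij (\<lambda>x. S x - t *\<^sub>R x)" "d \<le> t" and "e > 0"
  obtains \<mu> where "\<not> bij (\<lambda>y. R y - \<mu> *\<^sub>R y)" "\<bar>t - \<mu>\<bar> \<le> \<delta> / sqrt \<kappa> + e"
proof -
  have "t > 0" using \<open>0 < d\<close> t by simp
  obtain K where "K > 0" and K: "\<And>x. norm (J x) \<le> K * norm x"
    using bounded_linear.pos_bounded[OF J] by (auto simp: mult.commute)
  define lower where "lower \<eta> = (sqrt (\<kappa> * (t - \<eta>)^2 - \<nu> * \<eta> / d) - K * \<eta>) / t" for \<eta>
  have "(lower \<longlongrightarrow> (sqrt (\<kappa> * (t - 0)^2 - \<nu> * 0 / d) - K * 0) / t) (at_right 0)"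
    unfolding lower_def using \<open>t > 0\<close> \<open>0 < d\<close> by (intro tendsto_intros) auto
  then have lower_lim: "(lower \<longlongrightarrow> sqrt \<kappa>) (at_right 0)"
    using \<open>t > 0\<close> \<open>0 < \<kappa>\<close> by (simp add: real_sqrt_mult)
  have "((\<lambda>\<eta>. \<delta> + K * \<eta>) \<longlongrightarrow> \<delta> + K * 0) (at_right 0)" by (intro tendsto_intros)
  then have "((\<lambda>\<eta>. (\<delta> + K * \<eta>) / lower \<eta>) \<longlongrightarrow> \<delta> / sqrt \<kappa>) (at_right 0)"
    using tendsto_divide[OF _ lower_lim] \<open>0 < \<kappa>\<close> by simp
  then have "\<forall>\<^sub>F \<eta> in at_right 0. (\<delta> + K * \<eta>) / lower \<eta> < \<delta> / sqrt \<kappa> + e"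
    using \<open>e > 0\<close> by (simp add: order_tendstoD(2))
  moreover have "\<forall>\<^sub>F \<eta> in at_right 0. 0 < lower \<eta>"
    using order_tendstoD(1)[OF lower_lim] \<open>0 < \<kappa>\<close> by simp
  moreover have "\<forall>\<^sub>F \<eta> in at_right 0. \<eta> < t"
    using order_tendstoD(2)[OF tendsto_ident_at \<open>t > 0\<close>] .
  ultimately obtain \<eta> where \<eta>: "0 < \<eta>" "\<eta> < t" "0 < lower \<eta>"
      and ratio: "(\<delta> + K * \<eta>) / lower \<eta> < \<delta> / sqrt \<kappa> + e"
    using eventually_happens'[OF _ eventually_conj[OF eventually_at_right_less
          eventually_conj[OF _ eventually_conj]]]
    by (metis (mono_tags, lifting) trivial_limit_at_right_real)
  obtain \<mu> where "\<not> bij (\<lambda>y. R y - \<mu> *\<^sub>R y)" "\<bar>t - \<mu>\<bar> \<le> (\<delta> + K * \<eta>) / lower \<eta>"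
    using spectrum_transfer_at_defect[OF S R bounded_linear.linear[OF J] less_imp_le[OF \<open>K > 0\<close>]
        K coercive comm \<open>0 < d\<close> \<open>0 \<le> \<nu>\<close> less_imp_le[OF \<open>0 < \<kappa>\<close>[unfolded \<kappa>_def]] t \<eta>(1,2)]
      \<eta>(3) unfolding lower_def \<kappa>_def by blast
  then show thesis using that ratio by force
qed

lemma dist_out_form_resolvent_spectra_le:
  fixes Da :: "'a::complex_hilbert set" and a :: "'a \<Rightarrow> 'a \<Rightarrow> complex"
    and De :: "'b::complex_hilbert set" and ae :: "'b \<Rightarrow> 'b \<Rightarrow> complex"
    and J :: "'b \<Rightarrow> 'a" and \<delta> \<nu> d :: real
  assumes form_a: "closed_dd_nonneg_form Da a" and form_ae: "closed_dd_nonneg_form De ae"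
    and J: "bounded_linear J" and "0 \<le> \<delta>" "0 \<le> \<nu>"
    and comm: "onorm (\<lambda>u. J (form_resolvent De ae u) - form_resolvent Da a (J u)) \<le> \<delta>"
    and coercive: "\<forall>u\<in>De. (norm u)\<^sup>2 \<le> (norm (J u))\<^sup>2 + \<nu> * Re (ae u u)"
    and d: "0 < d" "d < 1" and \<nu>_small: "\<nu> < d / (1 - d)"
  shows "dist_out (real_spectrum (form_resolvent De ae) \<inter> {d..1})
                  (real_spectrum (form_resolvent Da a))
           \<le> ennreal (\<delta> / sqrt (1 - \<nu> * (1 / d - 1)))"
proof -
  define S where "S = form_resolvent De ae"
  define R where "R = form_resolvent Da a"
  have S: "bounded_linear S" "selfadjoint S" "\<And>u. norm (S u) \<le> norm u"
    unfolding S_def using form_ae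
    by (simp_all add: bounded_linear_form_resolvent selfadjoint_form_resolvent norm_form_resolvent_le)
  have R: "bounded_linear R" "selfadjoint R"
    unfolding R_def using form_a by (simp_all add: bounded_linear_form_resolvent selfadjoint_form_resolvent)
  have coercive_S: "(norm (S u))^2 \<le> (norm (J (S u)))^2 + \<nu> * inner (u - S u) (S u)" for u
    using coercive form_resolvent_in_domain[OF form_ae] Re_form_resolvent[OF form_ae]
    unfolding S_def by metis
  have "bounded_linear (\<lambda>u. J (S u) - R (J u))"
    by (rule bounded_linear_sub[OF bounded_linear_compose[OF J S(1)]
          bounded_linear_compose[OF R(1) J]])
  from onorm[OF this] have comm_S: "norm (J (S u) - R (J u)) \<le> \<delta> * norm u" for u
    using mult_right_mono[OF comm norm_ge_zero, of u] unfolding S_def R_def by (rule order_trans)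
  have \<kappa>: "0 < 1 - \<nu> * (1 / d - 1)" using coercivity_constant_pos[OF d \<nu>_small] .
  show ?thesis
    unfolding S_def[symmetric] R_def[symmetric]
  proof (rule dist_out_le)
    fix t e :: real assume "t \<in> real_spectrum S \<inter> {d..1}" "0 < e"
    then obtain \<mu> where "\<not> bij (\<lambda>y. R y - \<mu> *\<^sub>R y)"
        "\<bar>t - \<mu>\<bar> \<le> \<delta> / sqrt (1 - \<nu> * (1 / d - 1)) + e"
      using spectrum_transfer[OF S R J coercive_S comm_S d(1) \<open>0 \<le> \<nu>\<close> \<kappa>]
      by (auto simp: real_spectrum_iff)
    then show "\<exists>\<mu>\<in>real_spectrum R. \<bar>t - \<mu>\<bar> \<le> \<delta> / sqrt (1 - \<nu> * (1 / d - 1)) + e"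
      by (auto simp: real_spectrum_iff)
  qed (use \<open>0 \<le> \<delta>\<close> \<kappa> in simp)
qed

theorem theorem5:
  fixes Da :: "'a::complex_hilbert set" and a :: "'a \<Rightarrow> 'a \<Rightarrow> complex"
    and De :: "'b::complex_hilbert set" and ae :: "'b \<Rightarrow> 'b \<Rightarrow> complex"
    and J :: "'a \<Rightarrow> 'b" and Jc :: "'b \<Rightarrow> 'a"
    and \<delta> \<delta>c \<nu> \<nu>c d :: real
  assumes sepH: "separable_space TYPE('a)"
    and sepHe: "separable_space TYPE('b)"
    and form_a: "closed_dd_nonneg_form Da a"
    and form_ae: "closed_dd_nonneg_form De ae"
    and J_bl: "cbounded_linear J"
    and Jc_bl: "cbounded_linear Jc"
    and nonneg: "\<delta> \<ge> 0" "\<delta>c \<ge> 0" "\<nu> \<ge> 0" "\<nu>c \<ge> 0"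
    and est1: "onorm (\<lambda>f. form_resolvent De ae (J f) - J (form_resolvent Da a f)) \<le> \<delta>"
    and est2: "onorm (\<lambda>u. Jc (form_resolvent De ae u) - form_resolvent Da a (Jc u)) \<le> \<delta>c"
    and est3: "\<forall>f\<in>Da. (norm f)\<^sup>2 \<le> (norm (J f))\<^sup>2 + \<nu> * Re (a f f)"
    and est4: "\<forall>u\<in>De. (norm u)\<^sup>2 \<le> (norm (Jc u))\<^sup>2 + \<nu>c * Re (ae u u)"
    and d: "0 < d" "d < 1"
    and \<nu>_small: "\<nu> < d / (1 - d)" "\<nu>c < d / (1 - d)"
  shows "dist_out (real_spectrum (form_resolvent De ae) \<inter> {d..1})
                  (real_spectrum (form_resolvent Da a))
           \<le> ennreal (\<delta>c / sqrt (1 - \<nu>c * (1 / d - 1)))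
       \<and> dist_out (real_spectrum (form_resolvent Da a) \<inter> {d..1})
                  (real_spectrum (form_resolvent De ae))
           \<le> ennreal (\<delta> / sqrt (1 - \<nu> * (1 / d - 1)))"
proof
  show "dist_out (real_spectrum (form_resolvent De ae) \<inter> {d..1})
          (real_spectrum (form_resolvent Da a)) \<le> ennreal (\<delta>c / sqrt (1 - \<nu>c * (1 / d - 1)))"
    using Jc_bl unfolding cbounded_linear_def
    by (intro dist_out_form_resolvent_spectra_le[OF form_a form_ae _ nonneg(2,4) est2 est4 d \<nu>_small(2)])
      simp
  have "onorm (\<lambda>f. J (form_resolvent Da a f) - form_resolvent De ae (J f)) \<le> \<delta>"
    using est1 onorm_neg[of "\<lambda>f. form_resolvent De ae (J f) - J (form_resolvent Da a f)"] by simp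
  then show "dist_out (real_spectrum (form_resolvent Da a) \<inter> {d..1})
          (real_spectrum (form_resolvent De ae)) \<le> ennreal (\<delta> / sqrt (1 - \<nu> * (1 / d - 1)))"
    using J_bl unfolding cbounded_linear_def
    by (intro dist_out_form_resolvent_spectra_le[OF form_ae form_a _ nonneg(1,3) _ est3 d \<nu>_small(1)])
      simp_all
qed

end
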